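(* For every $n\ge1$, the number of minimal SR states on $K_n^0$ equals the number of spanning forests of the complete graph $K_n$ on $n$ labelled vertices.
   Context: $K_n^0$ is the complete graph on vertex set $\{0,1,\dots,n\}$ with sink $0$; every vertex has degree $n$. A configuration is $c\in\mathbb{Z}_{\ge0}^n$, stable if $c_i\le n-1$ for all $i$. SSM (parameter $p\in(0,1)$): an unstable vertex $i$, independently for each incident edge, sends one grain along it with probability $p$ (grains to the sink disappear), otherwise keeps it. The SSM Markov chain on stable configurations adds a grain at vertex $i$ with probability $\mu_i>0$ and then stabilises; SR = recurrent state of this chain. A minimal SR state is one that is minimal among SR states for the componentwise order. A spanning forest of a graph is an acyclic subgraph containing all its vertices. *)

theory Defs
  imports Main
begin

(* Graph K_n^0: vertices {0..n}, sink 0, non-sink vertices {1..n}; complete graph,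
   so every vertex has degree n.  A configuration is a function nat => nat
   vanishing outside {1..n}. *)

definition sconfig :: "nat \<Rightarrow> (nat \<Rightarrow> nat) \<Rightarrow> bool" where
  "sconfig n c \<longleftrightarrow> (\<forall>j. j \<notin> {1..n} \<longrightarrow> c j = 0)"

definition stable :: "nat \<Rightarrow> (nat \<Rightarrow> nat) \<Rightarrow> bool" where
  "stable n c \<longleftrightarrow> (\<forall>i\<in>{1..n}. c i \<le> n - 1)"

(* One SSM toppling with positive probability: an unstable vertex i sends one grain
   along each edge of a subset S of its incident edges (neighbours {0..n}-{i});
   grains sent to the sink 0 disappear.  Every subset S has probability
   p^|S| (1-p)^(n-|S|) > 0 for p in (0,1). *)
definition ssm_topple :: "nat \<Rightarrow> (nat \<Rightarrow> nat) \<Rightarrow> (nat \<Rightarrow> nat) \<Rightarrow> bool" where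
  "ssm_topple n c c' \<longleftrightarrow>
     (\<exists>i\<in>{1..n}. c i \<ge> n \<and>
       (\<exists>S. S \<subseteq> {0..n} - {i} \<and>
          c' = (\<lambda>j. if j = i then c i - card S
                     else if j \<in> S \<and> j \<noteq> 0 then c j + 1 else c j)))"

definition stabilises_to :: "nat \<Rightarrow> (nat \<Rightarrow> nat) \<Rightarrow> (nat \<Rightarrow> nat) \<Rightarrow> bool" where
  "stabilises_to n c c' \<longleftrightarrow> (ssm_topple n)\<^sup>*\<^sup>* c c' \<and> stable n c'"

(* Positive-probability transition of the SSM Markov chain on stable configurations:
   add a grain at some vertex i (probability mu_i > 0), then stabilise. *)
definition ssm_step :: "nat \<Rightarrow> (nat \<Rightarrow> nat) \<Rightarrow> (nat \<Rightarrow> nat) \<Rightarrow> bool" where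
  "ssm_step n c c' \<longleftrightarrow> sconfig n c \<and> stable n c \<and>
     (\<exists>i\<in>{1..n}. stabilises_to n (c(i := c i + 1)) c')"

(* SR: recurrent state of the (finite) SSM Markov chain: every state reachable from c
   leads back to c. *)
definition SR :: "nat \<Rightarrow> (nat \<Rightarrow> nat) \<Rightarrow> bool" where
  "SR n c \<longleftrightarrow> sconfig n c \<and> stable n c \<and>
     (\<forall>c'. (ssm_step n)\<^sup>*\<^sup>* c c' \<longrightarrow> (ssm_step n)\<^sup>*\<^sup>* c' c)"

definition minimal_SR :: "nat \<Rightarrow> (nat \<Rightarrow> nat) \<Rightarrow> bool" where
  "minimal_SR n c \<longleftrightarrow> SR n c \<and>
     \<not> (\<exists>c'. SR n c' \<and> c' \<noteq> c \<and> (\<forall>i\<in>{1..n}. c' i \<le> c i))"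

definition Kn_edges :: "nat \<Rightarrow> nat set set" where
  "Kn_edges n = {{u, v} | u v. u \<in> {1..n} \<and> v \<in> {1..n} \<and> u \<noteq> v}"

definition has_cycle :: "nat set set \<Rightarrow> bool" where
  "has_cycle F \<longleftrightarrow> (\<exists>vs. length vs \<ge> 3 \<and> distinct vs \<and>
      (\<forall>i < length vs. {vs ! i, vs ! ((i + 1) mod length vs)} \<in> F))"

definition spanning_forest_Kn :: "nat \<Rightarrow> nat set set \<Rightarrow> bool" where
  "spanning_forest_Kn n F \<longleftrightarrow> F \<subseteq> Kn_edges n \<and> \<not> has_cycle F"

end

theory Submission
  imports Defs
begin

text \<open>A stable configuration is recurrent for the SSM chain on \<open>K\<^sub>n\<^sup>0\<close> iff it dominates the
  indegree vector of some orientation of \<open>K\<^sub>n\<close>. Domination survives every toppling, because the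
  firing vertex may reorient its edges: towards the neighbours it fed, and towards itself otherwise.
  Conversely, from the full configuration (all vertices at \<open>n - 1\<close>) every indegree vector is reached
  by adding a grain at the vertices \<open>1, \<dots>, n\<close> in turn. All indegree vectors have the same sum,
  the number of edges, so the minimal recurrent states are exactly the indegree vectors.

  For any multigraph, the number of distinct indegree vectors of orientations equals the number of
  spanning forests: both counts satisfy deletion-contraction. Adding an edge \<open>e = ab\<close> to \<open>G\<close>
  raises each vector at \<open>a\<close> or at \<open>b\<close>; the vectors that are new when raised at \<open>b\<close> are mapped
  bijectively onto the vectors of \<open>G/e\<close> by merging \<open>b\<close> into \<open>a\<close>, injectivity coming from an
  exchange argument along paths in the difference of two orientations.\<close>

section \<open>Indegree vectors and forests of multigraphs\<close>

text \<open>A multigraph is an edge set \<open>E\<close> with endpoint map \<open>ends\<close> (loops allowed); an orientation \<open>H\<close>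
  chooses the head \<open>H e\<close> of each edge.\<close>

definition orientation :: "'e set \<Rightarrow> ('e \<Rightarrow> 'v \<times> 'v) \<Rightarrow> ('e \<Rightarrow> 'v) \<Rightarrow> bool" where
  "orientation E ends H \<longleftrightarrow> (\<forall>e\<in>E. H e = fst (ends e) \<or> H e = snd (ends e))"

definition indegree :: "'e set \<Rightarrow> ('e \<Rightarrow> 'v) \<Rightarrow> 'v \<Rightarrow> nat" where
  "indegree E H x = card {e\<in>E. H e = x}"

definition indegree_vectors :: "'e set \<Rightarrow> ('e \<Rightarrow> 'v \<times> 'v) \<Rightarrow> ('v \<Rightarrow> nat) set" where
  "indegree_vectors E ends = {indegree E H | H. orientation E ends H}"

definition incr :: "'v \<Rightarrow> ('v \<Rightarrow> nat) \<Rightarrow> 'v \<Rightarrow> nat" where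
  "incr x d = d(x := d x + 1)"

lemma inj_incr: "inj (incr x)"
  by (rule injI) (metis fun_upd_idem_iff fun_upd_upd incr_def add_right_cancel)

lemma card_incr_image: "card (incr x ` A) = card A"
  by (rule card_image[OF inj_on_subset[OF inj_incr subset_UNIV]])

lemma indegree_cong: "(\<And>e. e \<in> E \<Longrightarrow> H e = H' e) \<Longrightarrow> indegree E H = indegree E H'"
  unfolding indegree_def by (intro ext arg_cong[where f=card]) auto

lemma indegree_insert:
  assumes "finite E" "e \<notin> E"
  shows "indegree (insert e E) H = incr (H e) (indegree E H)"
proof
  fix x
  have "{e'\<in>insert e E. H e' = x} = (if H e = x then insert e {e'\<in>E. H e' = x} else {e'\<in>E. H e' = x})"
    by auto
  then show "indegree (insert e E) H x = incr (H e) (indegree E H) x"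
    using assms unfolding indegree_def incr_def by auto
qed

lemma sum_indegree:
  assumes "finite E" "finite V" "H ` E \<subseteq> V"
  shows "(\<Sum>x\<in>V. indegree E H x) = card E"
  using sum.group[of E V H "\<lambda>_. 1::nat"] assms unfolding indegree_def by simp

lemma indegree_vectors_empty: "indegree_vectors {} ends = {\<lambda>_. 0}"
  unfolding indegree_vectors_def indegree_def orientation_def by auto

lemma indegree_vectors_insert:
  assumes "finite E" "e \<notin> E"
  shows "indegree_vectors (insert e E) ends =
           incr (fst (ends e)) ` indegree_vectors E ends \<union> incr (snd (ends e)) ` indegree_vectors E ends"
proof (intro equalityI subsetI)
  fix d assume "d \<in> indegree_vectors (insert e E) ends"
  then obtain H where H: "orientation (insert e E) ends H" "d = indegree (insert e E) H"
    unfolding indegree_vectors_def by blast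
  have "indegree E H \<in> indegree_vectors E ends"
    using H(1) unfolding indegree_vectors_def orientation_def by auto
  moreover have "d = incr (H e) (indegree E H)" using H(2) indegree_insert[OF assms] by simp
  moreover have "H e = fst (ends e) \<or> H e = snd (ends e)" using H(1) unfolding orientation_def by auto
  ultimately show "d \<in> incr (fst (ends e)) ` indegree_vectors E ends \<union> incr (snd (ends e)) ` indegree_vectors E ends"
    by auto
next
  have *: "incr y d \<in> indegree_vectors (insert e E) ends"
    if d: "d \<in> indegree_vectors E ends" and y: "y = fst (ends e) \<or> y = snd (ends e)" for d y
  proof -
    obtain H where H: "orientation E ends H" "d = indegree E H"
      using d unfolding indegree_vectors_def by blast
    have "orientation (insert e E) ends (H(e := y))" using H(1) y unfolding orientation_def by auto
    moreover have "indegree E (H(e := y)) = indegree E H" using assms(2) by (intro indegree_cong) auto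
    then have "incr y d = indegree (insert e E) (H(e := y))"
      using H(2) indegree_insert[OF assms, of "H(e := y)"] by simp
    ultimately show ?thesis unfolding indegree_vectors_def by blast
  qed
  fix d assume "d \<in> incr (fst (ends e)) ` indegree_vectors E ends \<union> incr (snd (ends e)) ` indegree_vectors E ends"
  then show "d \<in> indegree_vectors (insert e E) ends" using * by blast
qed

lemma finite_indegree_vectors: "finite E \<Longrightarrow> finite (indegree_vectors E ends)"
  by (induction E rule: finite_induct) (simp_all add: indegree_vectors_empty indegree_vectors_insert)

definition rename_vertex :: "'v \<Rightarrow> 'v \<Rightarrow> 'v \<Rightarrow> 'v" where
  "rename_vertex a b x = (if x = b then a else x)"

definition contract :: "'v \<Rightarrow> 'v \<Rightarrow> ('e \<Rightarrow> 'v \<times> 'v) \<Rightarrow> 'e \<Rightarrow> 'v \<times> 'v" where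
  "contract a b ends e = map_prod (rename_vertex a b) (rename_vertex a b) (ends e)"

definition merge :: "'v \<Rightarrow> 'v \<Rightarrow> ('v \<Rightarrow> nat) \<Rightarrow> 'v \<Rightarrow> nat" where
  "merge a b d = d(a := d a + d b, b := 0)"

lemma merge_eq_merge_iff:
  assumes "a \<noteq> b"
  shows "merge a b d1 = merge a b d2 \<longleftrightarrow>
           (\<forall>x. x \<noteq> a \<longrightarrow> x \<noteq> b \<longrightarrow> d1 x = d2 x) \<and> d1 a + d1 b = d2 a + d2 b"
proof
  assume "merge a b d1 = merge a b d2"
  then have "\<And>x. merge a b d1 x = merge a b d2 x" by simp
  then show "(\<forall>x. x \<noteq> a \<longrightarrow> x \<noteq> b \<longrightarrow> d1 x = d2 x) \<and> d1 a + d1 b = d2 a + d2 b"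
    using assms unfolding merge_def by (metis fun_upd_other fun_upd_same)
qed (auto simp: merge_def)

lemma indegree_rename_vertex:
  assumes "finite E" "a \<noteq> b"
  shows "indegree E (rename_vertex a b \<circ> H) = merge a b (indegree E H)"
proof
  fix x
  consider "x = b" | "x = a" | "x \<noteq> a" "x \<noteq> b" by blast
  then show "indegree E (rename_vertex a b \<circ> H) x = merge a b (indegree E H) x"
  proof cases
    case 1
    then have "{e\<in>E. rename_vertex a b (H e) = x} = {}" using assms by (auto simp: rename_vertex_def)
    then show ?thesis using 1 assms by (simp add: indegree_def merge_def)
  next
    case 2
    have "{e\<in>E. rename_vertex a b (H e) = x} = {e\<in>E. H e = a} \<union> {e\<in>E. H e = b}"
      using 2 assms by (auto simp: rename_vertex_def)
    moreover have "card ({e\<in>E. H e = a} \<union> {e\<in>E. H e = b}) = card {e\<in>E. H e = a} + card {e\<in>E. H e = b}"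
      using assms by (intro card_Un_disjoint) auto
    ultimately show ?thesis using 2 assms by (simp add: indegree_def merge_def)
  next
    case 3
    then have "{e\<in>E. rename_vertex a b (H e) = x} = {e\<in>E. H e = x}" by (auto simp: rename_vertex_def)
    then show ?thesis using 3 by (simp add: indegree_def merge_def)
  qed
qed

lemma indegree_vectors_contract:
  assumes "finite E" "a \<noteq> b"
  shows "indegree_vectors E (contract a b ends) = merge a b ` indegree_vectors E ends"
proof (intro equalityI subsetI)
  fix d assume "d \<in> indegree_vectors E (contract a b ends)"
  then obtain H' where H': "orientation E (contract a b ends) H'" "d = indegree E H'"
    unfolding indegree_vectors_def by blast
  define H where "H e = (if H' e = rename_vertex a b (fst (ends e)) then fst (ends e) else snd (ends e))" for e
  have "orientation E ends H" unfolding orientation_def H_def by auto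
  moreover have "indegree E H' = indegree E (rename_vertex a b \<circ> H)"
    using H'(1) unfolding orientation_def contract_def H_def by (intro indegree_cong) auto
  ultimately show "d \<in> merge a b ` indegree_vectors E ends"
    using H'(2) indegree_rename_vertex[OF assms] unfolding indegree_vectors_def by auto
next
  fix d assume "d \<in> merge a b ` indegree_vectors E ends"
  then obtain H where H: "orientation E ends H" "d = merge a b (indegree E H)"
    unfolding indegree_vectors_def by blast
  have "orientation E (contract a b ends) (rename_vertex a b \<circ> H)"
    using H(1) unfolding orientation_def contract_def by auto
  then have "indegree E (rename_vertex a b \<circ> H) \<in> indegree_vectors E (contract a b ends)"
    unfolding indegree_vectors_def by blast
  then show "d \<in> indegree_vectors E (contract a b ends)"
    using H(2) indegree_rename_vertex[OF assms] by simp
qed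

definition net_outflow :: "('e \<Rightarrow> 'v) \<Rightarrow> ('e \<Rightarrow> 'v) \<Rightarrow> 'e set \<Rightarrow> 'v \<Rightarrow> int" where
  "net_outflow tail head K x = int (card {e\<in>K. tail e = x}) - int (card {e\<in>K. head e = x})"

lemma net_outflow_empty: "net_outflow tail head {} x = 0"
  unfolding net_outflow_def by simp

lemma net_outflow_insert:
  assumes "finite P" "e \<notin> P"
  shows "net_outflow tail head (insert e P) x =
           net_outflow tail head P x + of_bool (tail e = x) - of_bool (head e = x)"
proof -
  have "card {e'\<in>insert e P. f e' = x} = card {e'\<in>P. f e' = x} + of_bool (f e = x)" for f
  proof -
    have "{e'\<in>insert e P. f e' = x} = (if f e = x then insert e {e'\<in>P. f e' = x} else {e'\<in>P. f e' = x})"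
      by auto
    then show ?thesis using assms by simp
  qed
  then show ?thesis unfolding net_outflow_def by simp
qed

lemma net_outflow_unit_path:
  assumes "finite K" "\<forall>e\<in>K. tail e \<noteq> head e" "net_outflow tail head K v > 0"
  shows "\<exists>P w. P \<subseteq> K \<and> net_outflow tail head K w < 0 \<and>
           (\<forall>x. net_outflow tail head P x = of_bool (x = v) - of_bool (x = w))"
  using assms
proof (induction "card K" arbitrary: K v rule: less_induct)
  case less
  let ?net = "net_outflow tail head"
  have "card {e\<in>K. tail e = v} > 0" using less.prems(3) unfolding net_outflow_def by linarith
  then have "{e\<in>K. tail e = v} \<noteq> {}" by force
  then obtain e where e: "e \<in> K" "tail e = v" by blast
  define K' where "K' = K - {e}"
  define y where "y = head e"
  have yv: "y \<noteq> v" using less.prems(2) e y_def by auto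
  have fK': "finite K'" and K: "K = insert e K'" and eK': "e \<notin> K'" using less.prems(1) e K'_def by auto
  have net_K: "?net K x = ?net K' x + of_bool (v = x) - of_bool (y = x)" for x
    unfolding K net_outflow_insert[OF fK' eK'] using e y_def by simp
  have single: "?net {e} x = of_bool (x = v) - of_bool (x = y)" for x
    using net_outflow_insert[of "{}" e tail head x] e y_def by (simp add: net_outflow_empty)
  show ?case
  proof (cases "?net K y < 0")
    case True
    then show ?thesis using single e by blast
  next
    case False
    then have "?net K' y > 0" using net_K[of y] yv by simp
    moreover have "card K' < card K" using card_Diff1_less[OF less.prems(1) e(1)] K'_def by simp
    ultimately obtain P w where P: "P \<subseteq> K'" "?net K' w < 0"
      "\<forall>x. ?net P x = of_bool (x = y) - of_bool (x = w)"
      using less.hyps[of K' y] less.prems(2) fK' K by blast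
    have "w \<noteq> y" "w \<noteq> v" using P(2) \<open>?net K' y > 0\<close> net_K[of v] less.prems(3) yv by auto
    then have "?net K w < 0" using net_K[of w] P(2) by simp
    moreover have "\<forall>x. ?net (insert e P) x = of_bool (x = v) - of_bool (x = w)"
      unfolding net_outflow_insert[OF finite_subset[OF P(1) fK'] contra_subsetD[OF P(1) eK']]
      using P(3) e y_def by auto
    moreover have "insert e P \<subseteq> K" using P(1) K by blast
    ultimately show ?thesis by blast
  qed
qed

lemma card_Collect_split:
  assumes "finite E" "P \<subseteq> E"
  shows "card {e\<in>E. f e = x} = card {e\<in>E - P. f e = x} + card {e\<in>P. f e = x}"
proof -
  have "{e\<in>E. f e = x} = {e\<in>E - P. f e = x} \<union> {e\<in>P. f e = x}" using assms by auto
  moreover have "finite {e\<in>E - P. f e = x}" "finite {e\<in>P. f e = x}"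
    using assms by (auto intro: finite_subset)
  ultimately show ?thesis by (simp add: card_Un_disjoint disjoint_iff)
qed

lemma indegree_redirect:
  assumes "finite E" "P \<subseteq> E"
  shows "int (indegree E (\<lambda>e. if e \<in> P then H2 e else H1 e) x) = int (indegree E H1 x) + net_outflow H2 H1 P x"
proof -
  have "{e\<in>E - P. (if e \<in> P then H2 e else H1 e) = x} = {e\<in>E - P. H1 e = x}"
    "{e\<in>P. (if e \<in> P then H2 e else H1 e) = x} = {e\<in>P. H2 e = x}" by auto
  then have "indegree E (\<lambda>e. if e \<in> P then H2 e else H1 e) x = card {e\<in>E - P. H1 e = x} + card {e\<in>P. H2 e = x}"
    unfolding indegree_def using card_Collect_split[OF assms, of "\<lambda>e. if e \<in> P then H2 e else H1 e" x] by simp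
  moreover have "indegree E H1 x = card {e\<in>E - P. H1 e = x} + card {e\<in>P. H1 e = x}"
    unfolding indegree_def by (rule card_Collect_split[OF assms])
  ultimately show ?thesis unfolding net_outflow_def by simp
qed

text \<open>The edges on which orientations realising \<open>d1\<close> and \<open>d2\<close> differ carry a flow from \<open>b\<close> to \<open>a\<close>;
  redirecting a unit path of it moves one unit of indegree from \<open>a\<close> to \<open>b\<close>.\<close>

lemma indegree_vectors_shift:
  assumes fin: "finite E" and ab: "a \<noteq> b"
    and d1: "d1 \<in> indegree_vectors E ends" and d2: "d2 \<in> indegree_vectors E ends"
    and merge: "merge a b d1 = merge a b d2" and less: "d2 a < d1 a"
  shows "d1(a := d1 a - 1, b := d1 b + 1) \<in> indegree_vectors E ends"
proof -
  obtain H1 H2 where H1: "orientation E ends H1" "d1 = indegree E H1"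
    and H2: "orientation E ends H2" "d2 = indegree E H2"
    using d1 d2 unfolding indegree_vectors_def by blast
  have off_ab: "\<forall>x. x \<noteq> a \<longrightarrow> x \<noteq> b \<longrightarrow> d1 x = d2 x" and sum: "d1 a + d1 b = d2 a + d2 b"
    using merge merge_eq_merge_iff[OF ab] by auto
  define K where "K = {e\<in>E. H1 e \<noteq> H2 e}"
  have KE: "K \<subseteq> E" and fK: "finite K" using fin by (auto simp: K_def)
  have net_K: "net_outflow H2 H1 K x = int (d2 x) - int (d1 x)" for x
  proof -
    have "indegree E (\<lambda>e. if e \<in> K then H2 e else H1 e) = indegree E H2"
      by (rule indegree_cong) (auto simp: K_def)
    then show ?thesis using indegree_redirect[OF fin KE, of H2 H1 x] H1(2) H2(2) by simp
  qed
  have "\<forall>e\<in>K. H2 e \<noteq> H1 e" by (auto simp: K_def)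
  moreover have "net_outflow H2 H1 K b > 0" using net_K[of b] sum less by simp
  ultimately obtain P w where P: "P \<subseteq> K" "net_outflow H2 H1 K w < 0"
    "\<forall>x. net_outflow H2 H1 P x = of_bool (x = b) - of_bool (x = w)"
    using net_outflow_unit_path[OF fK] by metis
  have "w = a" using P(2) net_K[of w] off_ab sum less by (cases "w = b") auto
  define H where "H e = (if e \<in> P then H2 e else H1 e)" for e
  have "orientation E ends H" using H1(1) H2(1) unfolding orientation_def H_def by auto
  moreover have "d1(a := d1 a - 1, b := d1 b + 1) = indegree E H"
  proof
    fix x
    have "int (indegree E H x) = int (d1 x) + of_bool (x = b) - of_bool (x = a)"
      using indegree_redirect[OF fin subset_trans[OF P(1) KE], of H2 H1 x] P(3) \<open>w = a\<close> H1(2)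
      unfolding H_def by simp
    then show "(d1(a := d1 a - 1, b := d1 b + 1)) x = indegree E H x"
      using ab less by (cases "x = a"; cases "x = b") auto
  qed
  ultimately show ?thesis unfolding indegree_vectors_def by blast
qed

lemma incr_eq_incr_iff:
  assumes "a \<noteq> b"
  shows "incr b d = incr a d' \<longleftrightarrow> 0 < d a \<and> d' = d(a := d a - 1, b := d b + 1)"
proof
  assume eq: "incr b d = incr a d'"
  have pointwise: "d x + of_bool (x = b) = d' x + of_bool (x = a)" for x
    using fun_cong[OF eq, of x] assms unfolding incr_def by (cases "x = a"; cases "x = b") auto
  show "0 < d a \<and> d' = d(a := d a - 1, b := d b + 1)"
  proof
    show "0 < d a" using pointwise[of a] assms by simp
    show "d' = d(a := d a - 1, b := d b + 1)"
    proof
      fix x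
      show "d' x = (d(a := d a - 1, b := d b + 1)) x"
        using pointwise[of x] assms by (cases "x = a"; cases "x = b") auto
    qed
  qed
qed (auto simp: incr_def assms)

text \<open>The vectors \<open>d\<close> with \<open>incr b d \<notin> incr a ` D\<close> are those yielding new indegree vectors when an
  edge \<open>ab\<close> is added; merging maps them bijectively onto the indegree vectors of the contraction.\<close>

lemma inj_on_merge_tops:
  fixes ends :: "'e \<Rightarrow> 'v \<times> 'v"
  assumes "finite E" "a \<noteq> b"
  defines "D \<equiv> indegree_vectors E ends"
  shows "inj_on (merge a b) {d\<in>D. incr b d \<notin> incr a ` D}"
proof (rule inj_onI)
  have not_less: "\<not> d2 a < d1 a"
    if "d1 \<in> D" "incr b d1 \<notin> incr a ` D" "d2 \<in> D" "merge a b d1 = merge a b d2" for d1 d2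
  proof
    assume "d2 a < d1 a"
    then have "d1(a := d1 a - 1, b := d1 b + 1) \<in> D"
      using indegree_vectors_shift[OF assms(1,2)] that unfolding D_def by blast
    moreover have "incr b d1 = incr a (d1(a := d1 a - 1, b := d1 b + 1))"
      using incr_eq_incr_iff[OF assms(2)] \<open>d2 a < d1 a\<close> by simp
    ultimately show False using that(2) by blast
  qed
  fix d1 d2 assume d1: "d1 \<in> {d\<in>D. incr b d \<notin> incr a ` D}" and d2: "d2 \<in> {d\<in>D. incr b d \<notin> incr a ` D}"
    and eq: "merge a b d1 = merge a b d2"
  have "d1 a = d2 a" using not_less[of d1 d2] not_less[of d2 d1] d1 d2 eq by force
  then show "d1 = d2" using eq merge_eq_merge_iff[OF assms(2)] by (intro ext) (metis add_left_cancel)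
qed

lemma merge_image_tops:
  assumes "a \<noteq> b"
  shows "merge a b ` {d\<in>D. incr b d \<notin> incr a ` D} = merge a b ` D"
proof (intro equalityI subsetI)
  fix m assume "m \<in> merge a b ` D"
  then obtain d where d: "d \<in> D" "m = merge a b d" by blast
  define P where "P d' \<longleftrightarrow> d' \<in> D \<and> merge a b d' = m" for d'
  have "\<forall>d'. P d' \<longrightarrow> d' b < d a + d b + 1"
    using d(2) merge_eq_merge_iff[OF assms] unfolding P_def by auto
  then obtain d' where d': "P d'" and greatest: "\<forall>d''. P d'' \<longrightarrow> d'' b \<le> d' b"
    using ex_has_greatest_nat[of P d "\<lambda>d'. d' b"] d unfolding P_def by blast
  have "incr b d' \<notin> incr a ` D"
  proof
    assume "incr b d' \<in> incr a ` D"
    then obtain d'' where d'': "d'' \<in> D" "d'' = d'(a := d' a - 1, b := d' b + 1)" "0 < d' a"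
      using incr_eq_incr_iff[OF assms] by blast
    then have "P d''" using d' assms unfolding P_def merge_def by auto
    then show False using greatest d''(2) assms by fastforce
  qed
  then show "m \<in> merge a b ` {d\<in>D. incr b d \<notin> incr a ` D}" using d' unfolding P_def by blast
qed auto

lemma card_indegree_vectors_insert:
  assumes "finite E" "e \<notin> E" "fst (ends e) \<noteq> snd (ends e)"
  shows "card (indegree_vectors (insert e E) ends) =
           card (indegree_vectors E ends) +
           card (indegree_vectors E (contract (fst (ends e)) (snd (ends e)) ends))"
proof -
  define a b D where "a = fst (ends e)" and "b = snd (ends e)" and "D = indegree_vectors E ends"
  define tops where "tops = {d\<in>D. incr b d \<notin> incr a ` D}"
  have ab: "a \<noteq> b" using assms(3) by (simp add: a_def b_def)
  have fD: "finite D" using finite_indegree_vectors[OF assms(1)] by (simp add: D_def)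
  have "indegree_vectors (insert e E) ends = incr a ` D \<union> incr b ` tops"
    using indegree_vectors_insert[OF assms(1,2)] by (auto simp: a_def b_def D_def tops_def)
  moreover have "incr a ` D \<inter> incr b ` tops = {}" by (auto simp: tops_def) (metis image_eqI)
  ultimately have "card (indegree_vectors (insert e E) ends) = card D + card tops"
    using fD by (simp add: card_Un_disjoint tops_def card_incr_image)
  also have "card tops = card (merge a b ` tops)"
    using inj_on_merge_tops[OF assms(1) ab] by (simp add: card_image tops_def D_def)
  also have "merge a b ` tops = indegree_vectors E (contract a b ends)"
    using merge_image_tops[OF ab] indegree_vectors_contract[OF assms(1) ab] by (simp add: tops_def D_def)
  finally show ?thesis by (simp add: a_def b_def D_def)
qed

definition edge_vertices :: "('e \<Rightarrow> 'v \<times> 'v) \<Rightarrow> 'e set \<Rightarrow> 'v set" where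
  "edge_vertices ends J = (\<Union>e\<in>J. {fst (ends e), snd (ends e)})"

text \<open>Forests are defined by sparsity (every nonempty set of edges spans more vertices than it has
  edges); unlike acyclicity, this notion transforms simply under contraction.\<close>

definition forest :: "'e set \<Rightarrow> ('e \<Rightarrow> 'v \<times> 'v) \<Rightarrow> 'e set \<Rightarrow> bool" where
  "forest E ends I \<longleftrightarrow> I \<subseteq> E \<and> (\<forall>J\<subseteq>I. J \<noteq> {} \<longrightarrow> card J < card (edge_vertices ends J))"

lemma finite_edge_vertices: "finite J \<Longrightarrow> finite (edge_vertices ends J)"
  unfolding edge_vertices_def by auto

lemma edge_vertices_insert:
  "edge_vertices ends (insert e J) = insert (fst (ends e)) (insert (snd (ends e)) (edge_vertices ends J))"
  unfolding edge_vertices_def by auto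

lemma edge_vertices_contract:
  "edge_vertices (contract a b ends) J = rename_vertex a b ` edge_vertices ends J"
  unfolding edge_vertices_def contract_def by auto

lemma card_rename_vertex_image:
  assumes "finite V" "a \<noteq> b"
  shows "card (rename_vertex a b ` V) = (if b \<in> V then card (insert a V) - 1 else card V)"
proof (cases "b \<in> V")
  case True
  then have "rename_vertex a b ` V = insert a V - {b}"
    using assms(2) unfolding rename_vertex_def by (auto intro: rev_image_eqI)
  then show ?thesis using True assms by simp
next
  case False
  then have "rename_vertex a b ` V = V" unfolding rename_vertex_def by auto
  then show ?thesis using False by simp
qed

lemma finite_forests: "finite E \<Longrightarrow> finite {I. forest E ends I}"
  by (rule finite_subset[of _ "Pow E"]) (auto simp: forest_def)

lemma forests_insert_loop:
  assumes "fst (ends e) = snd (ends e)"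
  shows "{I. forest (insert e E) ends I} = {I. forest E ends I}"
proof -
  have "e \<notin> I" if "forest (insert e E) ends I" for I
  proof
    assume "e \<in> I"
    then have "card {e} < card (edge_vertices ends {e})" using that unfolding forest_def by blast
    then show False using assms by (simp add: edge_vertices_def)
  qed
  then show ?thesis unfolding forest_def by blast
qed

lemma forest_insert_if_forest_contract:
  assumes fin: "finite E" and IE: "I \<subseteq> E" and ab: "fst (ends e) \<noteq> snd (ends e)"
    and forest: "forest E (contract (fst (ends e)) (snd (ends e)) ends) I"
  shows "forest (insert e E) ends (insert e I)"
  unfolding forest_def
proof (intro conjI allI impI)
  let ?a = "fst (ends e)" and ?b = "snd (ends e)"
  have sparse: "card J < card (rename_vertex ?a ?b ` edge_vertices ends J)" if "J \<subseteq> I" "J \<noteq> {}" for J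
    using forest that unfolding forest_def edge_vertices_contract by blast
  fix J assume J: "J \<subseteq> insert e I" "J \<noteq> {}"
  have fJ: "finite J" using J(1) IE fin by (meson finite_insert finite_subset subset_insertI2)
  show "card J < card (edge_vertices ends J)"
  proof (cases "e \<in> J")
    case False
    then have "card J < card (rename_vertex ?a ?b ` edge_vertices ends J)" using sparse J by blast
    also have "\<dots> \<le> card (edge_vertices ends J)" by (rule card_image_le[OF finite_edge_vertices[OF fJ]])
    finally show ?thesis .
  next
    case True
    define J' where "J' = J - {e}"
    define V' where "V' = edge_vertices ends J'"
    have J: "J = insert e J'" "e \<notin> J'" "J' \<subseteq> I" "finite J'" using True J fJ by (auto simp: J'_def)
    have fV': "finite V'" using finite_edge_vertices[OF J(4)] by (simp add: V'_def)
    have V: "edge_vertices ends J = insert ?a (insert ?b V')"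
      using edge_vertices_insert J(1) by (simp add: V'_def)
    show ?thesis
    proof (cases "J' = {}")
      case True
      then show ?thesis using V J(1) ab by (simp add: V'_def edge_vertices_def)
    next
      case False
      then have "card J' < card (rename_vertex ?a ?b ` V')" using sparse J(3) by (simp add: V'_def)
      then show ?thesis using V J fV' ab by (auto simp: card_rename_vertex_image card_insert_if split: if_splits)
    qed
  qed
qed (use IE forest in \<open>auto simp: forest_def\<close>)

lemma forest_contract_if_forest_insert:
  assumes fin: "finite E" and eE: "e \<notin> E" and ab: "fst (ends e) \<noteq> snd (ends e)"
    and IE: "I \<subseteq> E" and forest: "forest (insert e E) ends (insert e I)"
  shows "forest E (contract (fst (ends e)) (snd (ends e)) ends) I"
  unfolding forest_def edge_vertices_contract
proof (intro conjI allI impI)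
  let ?a = "fst (ends e)" and ?b = "snd (ends e)"
  have sparse: "card J < card (edge_vertices ends J)" if "J \<subseteq> insert e I" "J \<noteq> {}" for J
    using forest that unfolding forest_def by blast
  show "I \<subseteq> E" by (rule IE)
  fix J assume J: "J \<subseteq> I" "J \<noteq> {}"
  define V where "V = edge_vertices ends J"
  have fJ: "finite J" using J(1) IE fin by (meson finite_subset subset_trans)
  have eJ: "e \<notin> J" using J(1) IE eE by blast
  have fV: "finite V" using finite_edge_vertices[OF fJ] by (simp add: V_def)
  have "card J < card V" using sparse J by (auto simp: V_def)
  moreover have "card (insert e J) < card (edge_vertices ends (insert e J))"
    by (rule sparse) (use J(1) in auto)
  then have "card J + 1 < card (insert ?a (insert ?b V))"
    using eJ fJ by (simp add: edge_vertices_insert V_def)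
  ultimately show "card J < card (rename_vertex ?a ?b ` V)"
    using fV ab by (auto simp: card_rename_vertex_image card_insert_if split: if_splits)
qed

lemma forests_insert:
  assumes "finite E" "e \<notin> E" "fst (ends e) \<noteq> snd (ends e)"
  shows "{I. forest (insert e E) ends I} =
           {I. forest E ends I} \<union> insert e ` {I. forest E (contract (fst (ends e)) (snd (ends e)) ends) I}"
proof (intro equalityI subsetI)
  fix I assume "I \<in> {I. forest (insert e E) ends I}"
  then have I: "forest (insert e E) ends I" by simp
  show "I \<in> {I. forest E ends I} \<union> insert e ` {I. forest E (contract (fst (ends e)) (snd (ends e)) ends) I}"
  proof (cases "e \<in> I")
    case True
    then have "forest E (contract (fst (ends e)) (snd (ends e)) ends) (I - {e})"
      using forest_contract_if_forest_insert[of E e ends "I - {e}", OF assms] I unfolding forest_def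
      by (simp add: insert_absorb subset_insert_iff)
    then show ?thesis using True by (auto intro: image_eqI[of I "insert e" "I - {e}"])
  next
    case False
    then show ?thesis using I unfolding forest_def by blast
  qed
next
  fix I assume "I \<in> {I. forest E ends I} \<union> insert e ` {I. forest E (contract (fst (ends e)) (snd (ends e)) ends) I}"
  then consider "forest E ends I"
    | I' where "forest E (contract (fst (ends e)) (snd (ends e)) ends) I'" "I = insert e I'"
    by blast
  then show "I \<in> {I. forest (insert e E) ends I}"
  proof cases
    case 1
    then show ?thesis unfolding forest_def by blast
  next
    case 2
    then have "I' \<subseteq> E" unfolding forest_def by blast
    with forest_insert_if_forest_contract[OF assms(1) _ assms(3) 2(1)] show ?thesis using 2(2) by simp
  qed
qed

lemma card_forests_insert:
  assumes "finite E" "e \<notin> E" "fst (ends e) \<noteq> snd (ends e)"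
  shows "card {I. forest (insert e E) ends I} =
           card {I. forest E ends I} + card {I. forest E (contract (fst (ends e)) (snd (ends e)) ends) I}"
proof -
  let ?F' = "{I. forest E (contract (fst (ends e)) (snd (ends e)) ends) I}"
  have "\<forall>I\<in>?F'. e \<notin> I" using assms(2) unfolding forest_def by blast
  then have "inj_on (insert e) ?F'" unfolding inj_on_def by (metis Diff_insert_absorb)
  moreover have "{I. forest E ends I} \<inter> insert e ` ?F' = {}" using assms(2) unfolding forest_def by blast
  moreover have "finite {I. forest E ends I}" "finite ?F'" using finite_forests[OF assms(1)] by blast+
  ultimately show ?thesis
    using forests_insert[of E e ends, OF assms] by (simp add: card_Un_disjoint card_image)
qed

theorem card_indegree_vectors_eq_card_forests:
  "finite E \<Longrightarrow> card (indegree_vectors E ends) = card {I. forest E ends I}"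
proof (induction E arbitrary: ends rule: finite_induct)
  case empty
  have "{I. forest {} ends I} = {{}}" unfolding forest_def by auto
  then show ?case by (simp add: indegree_vectors_empty)
next
  case (insert e E)
  show ?case
  proof (cases "fst (ends e) = snd (ends e)")
    case True
    then have "indegree_vectors (insert e E) ends = incr (fst (ends e)) ` indegree_vectors E ends"
      using indegree_vectors_insert[OF insert(1,2), of ends] by simp
    then show ?thesis
      using insert.IH forests_insert_loop[where ends=ends and e=e and E=E, OF True]
      by (simp add: card_incr_image)
  next
    case False
    then show ?thesis
      using card_indegree_vectors_insert[of E e ends, OF insert(1,2) False]
        card_forests_insert[of E e ends, OF insert(1,2) False]
        insert.IH by simp
  qed
qed

section \<open>Cycles and spanning forests of the complete graph \<open>K\<^sub>n\<close>\<close>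

lemma has_cycle_mono: "has_cycle J \<Longrightarrow> J \<subseteq> F \<Longrightarrow> has_cycle F"
  unfolding has_cycle_def by blast

lemma not_mutual_successors_mod:
  fixes i j k :: nat
  assumes "3 \<le> k" "i < k" "j < k" "i = (j + 1) mod k" "j = (i + 1) mod k"
  shows False
proof (cases "Suc j = k")
  case True
  then have "i = 0" using assms(4) by simp
  then have "j = 1" using assms(1,5) by simp
  then show False using True assms(1) by simp
next
  case False
  then have "i = Suc j" using assms(3,4) by simp
  then show False using assms(1,2,5) by (cases "Suc i = k") simp_all
qed

lemma has_cycle_imp_dense:
  assumes "has_cycle F"
  obtains J where "J \<subseteq> F" "J \<noteq> {}" "finite J" "card (\<Union>J) \<le> card J"
proof -
  obtain vs where vs: "length vs \<ge> 3" "distinct vs"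
    "\<forall>i < length vs. {vs ! i, vs ! ((i + 1) mod length vs)} \<in> F"
    using assms unfolding has_cycle_def by blast
  define k where "k = length vs"
  define f where "f i = {vs ! i, vs ! ((i + 1) mod k)}" for i
  have k: "3 \<le> k" using vs(1) by (simp add: k_def)
  have nth_eq: "vs ! i = vs ! j \<longleftrightarrow> i = j" if "i < k" "j < k" for i j
    using vs(2) that by (simp add: k_def nth_eq_iff_index_eq)
  have inj: "inj_on f {..<k}"
  proof (rule inj_onI)
    fix i j assume "i \<in> {..<k}" "j \<in> {..<k}" and eq: "f i = f j"
    then have i: "i < k" and j: "j < k" by simp_all
    have succ: "(i + 1) mod k < k" "(j + 1) mod k < k" using k by simp_all
    have "vs ! i = vs ! j \<or> vs ! i = vs ! ((j + 1) mod k)" "vs ! j = vs ! i \<or> vs ! j = vs ! ((i + 1) mod k)"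
      using eq unfolding f_def by blast+
    then have "i = j \<or> i = (j + 1) mod k" "j = i \<or> j = (i + 1) mod k"
      using nth_eq[OF i j] nth_eq[OF i succ(2)] nth_eq[OF j i] nth_eq[OF j succ(1)] by blast+
    then show "i = j" using not_mutual_successors_mod[OF k i j] by metis
  qed
  have "\<Union>(f ` {..<k}) \<subseteq> set vs" using k unfolding f_def k_def by (auto intro!: nth_mem mod_less_divisor)
  then have "card (\<Union>(f ` {..<k})) \<le> k" using card_mono[of "set vs"] distinct_card[OF vs(2)] by (simp add: k_def)
  also have "k = card (f ` {..<k})" using card_image[OF inj] by simp
  finally show thesis using that[of "f ` {..<k}"] vs(3) k unfolding f_def k_def by fastforce
qed

definition is_path :: "'a set set \<Rightarrow> 'a list \<Rightarrow> bool" where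
  "is_path J p \<longleftrightarrow>
     p \<noteq> [] \<and> distinct p \<and> set p \<subseteq> \<Union>J \<and> (\<forall>i. Suc i < length p \<longrightarrow> {p ! i, p ! Suc i} \<in> J)"

lemma path_chord_imp_has_cycle:
  assumes p: "is_path J p" and j: "2 \<le> j" "j < length p" and chord: "{p ! 0, p ! j} \<in> J"
  shows "has_cycle J"
  unfolding has_cycle_def
proof (intro exI conjI allI impI)
  let ?vs = "take (Suc j) p"
  show "3 \<le> length ?vs" "distinct ?vs" using p j by (auto simp: is_path_def)
  fix i assume i: "i < length ?vs"
  show "{?vs ! i, ?vs ! ((i + 1) mod length ?vs)} \<in> J"
  proof (cases "i < j")
    case True
    then show ?thesis using p i j by (auto simp: is_path_def)
  next
    case False
    then have "i = j" using i j by simp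
    then show ?thesis using chord j by (simp add: insert_commute)
  qed
qed

lemma longest_path_exists:
  assumes "finite (\<Union>J)" "x \<in> \<Union>J"
  obtains p where "is_path J p" "\<forall>q. is_path J q \<longrightarrow> length q \<le> length p"
proof -
  have "is_path J [x]" using assms(2) by (simp add: is_path_def)
  moreover have "\<forall>q. is_path J q \<longrightarrow> length q < card (\<Union>J) + 1"
    using assms(1) unfolding is_path_def by (metis card_mono distinct_card less_Suc_eq_le Suc_eq_plus1)
  ultimately show thesis using that ex_has_greatest_nat[of "is_path J" "[x]" length "card (\<Union>J) + 1"] by blast
qed

lemma longest_path_first_neighbour:
  assumes p: "is_path J p" and longest: "\<forall>q. is_path J q \<longrightarrow> length q \<le> length p"
    and edge: "{p ! 0, y} \<in> J"
  shows "y \<in> set p"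
proof (rule ccontr)
  assume y: "y \<notin> set p"
  have "is_path J (y # p)"
    unfolding is_path_def
  proof (intro conjI allI impI)
    show "distinct (y # p)" "set (y # p) \<subseteq> \<Union>J" using p y edge by (auto simp: is_path_def)
  next
    fix i assume i: "Suc i < length (y # p)"
    show "{(y # p) ! i, (y # p) ! Suc i} \<in> J"
      using p i edge by (cases i) (auto simp: is_path_def insert_commute)
  qed simp
  then show False using longest by fastforce
qed

lemma doubleton_other:
  assumes "card T = 2" "x \<in> T"
  obtains y where "y \<noteq> x" "T = {x, y}"
  using assms by (metis card_2_iff insert_commute insertE singletonD)

lemma min_degree_two_imp_has_cycle:
  assumes fin: "finite J" and two: "\<forall>T\<in>J. card T = 2" and ne: "J \<noteq> {}"
    and deg: "\<forall>x\<in>\<Union>J. 2 \<le> card {T\<in>J. x \<in> T}"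
  shows "has_cycle J"
proof -
  have "finite (\<Union>J)" using fin two by (metis card.infinite finite_Union zero_neq_numeral)
  moreover obtain x0 where "x0 \<in> \<Union>J" using ne two by (metis UnionI card.empty ex_in_conv zero_neq_numeral)
  ultimately obtain p where p: "is_path J p" and longest: "\<forall>q. is_path J q \<longrightarrow> length q \<le> length p"
    by (rule longest_path_exists)
  define x where "x = p ! 0"
  have "x \<in> \<Union>J" using p unfolding is_path_def x_def by (auto intro: nth_mem)
  then have "\<not> card {T\<in>J. x \<in> T} \<le> Suc 0" using deg by fastforce
  then obtain T1 T2 where T12: "T1 \<in> J" "T2 \<in> J" "x \<in> T1" "x \<in> T2" "T1 \<noteq> T2"
    using fin by (auto simp: card_le_Suc0_iff_eq)
  obtain y1 y2 where y1: "y1 \<noteq> x" "T1 = {x, y1}" and y2: "y2 \<noteq> x" "T2 = {x, y2}"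
    using doubleton_other two T12 by metis
  obtain y where y: "{x, y} \<in> J" "y \<noteq> x" "1 < length p \<longrightarrow> y \<noteq> p ! 1"
    using y1 y2 T12 by (cases "y1 = p ! 1") auto
  have "y \<in> set p" using longest_path_first_neighbour[OF p longest] y(1) by (simp add: x_def)
  then obtain j where j: "j < length p" "p ! j = y" by (auto simp: in_set_conv_nth)
  have "j \<noteq> 0" using j(2) y(2) unfolding x_def by metis
  moreover have "j \<noteq> 1" using j y(3) by auto
  ultimately have "2 \<le> j" by simp
  then show ?thesis using path_chord_imp_has_cycle[OF p _ j(1)] y(1) j(2) by (simp add: x_def)
qed

lemma dense_imp_has_cycle:
  assumes "finite J" "\<forall>T\<in>J. card T = 2" "J \<noteq> {}" "card (\<Union>J) \<le> card J"
  shows "has_cycle J"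
  using assms
proof (induction "card J" arbitrary: J rule: less_induct)
  case less
  have fin: "finite J" and two: "\<forall>T\<in>J. card T = 2" and ne: "J \<noteq> {}" and dense: "card (\<Union>J) \<le> card J"
    using less.prems by auto
  have fU: "finite (\<Union>J)" using fin two by (metis card.infinite finite_Union zero_neq_numeral)
  show ?case
  proof (cases "\<forall>x\<in>\<Union>J. 2 \<le> card {T\<in>J. x \<in> T}")
    case True
    then show ?thesis using min_degree_two_imp_has_cycle[OF fin two ne] by blast
  next
    case False
    then obtain x where x: "x \<in> \<Union>J" "card {T\<in>J. x \<in> T} \<le> 1" by force
    define J' where "J' = {T\<in>J. x \<notin> T}"
    have "0 < card {T\<in>J. x \<in> T}" using fin x(1) by (auto simp: card_gt_0_iff)
    then have deg_x: "card {T\<in>J. x \<in> T} = 1" using x(2) by simp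
    have "card J = card (J' \<union> {T\<in>J. x \<in> T})" by (rule arg_cong[of _ _ card]) (auto simp: J'_def)
    also have "\<dots> = card J' + 1" using fin deg_x by (subst card_Un_disjoint) (auto simp: J'_def)
    finally have card_J: "card J = card J' + 1" .
    have "\<Union>J' \<subseteq> \<Union>J - {x}" unfolding J'_def by auto
    then have "card (\<Union>J') \<le> card (\<Union>J) - 1" using fU x(1) by (metis card_Diff_singleton card_mono finite_Diff)
    then have dense': "card (\<Union>J') \<le> card J'" using dense card_J by simp
    obtain T where T: "T \<in> J" using ne by blast
    then have "2 \<le> card (\<Union>J)" using two fU by (metis Union_upper card_mono)
    then have "J' \<noteq> {}" using dense card_J by auto
    moreover have "finite J'" "\<forall>T\<in>J'. card T = 2" using fin two by (auto simp: J'_def)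
    ultimately have "has_cycle J'" using less.hyps[of J'] card_J dense' by simp
    then show ?thesis using has_cycle_mono[of J' J] by (auto simp: J'_def)
  qed
qed

definition Kn_ends :: "nat set \<Rightarrow> nat \<times> nat" where
  "Kn_ends T = (Min T, Max T)"

lemma Kn_edgeE:
  assumes "T \<in> Kn_edges n"
  obtains u v where "T = {u, v}" "u \<in> {1..n}" "v \<in> {1..n}" "u \<noteq> v"
  using assms unfolding Kn_edges_def by blast

lemma doubleton_in_Kn_edges: "u \<in> {1..n} \<Longrightarrow> v \<in> {1..n} \<Longrightarrow> u \<noteq> v \<Longrightarrow> {u, v} \<in> Kn_edges n"
  unfolding Kn_edges_def by blast

lemma card_Kn_edge: "T \<in> Kn_edges n \<Longrightarrow> card T = 2"
  by (erule Kn_edgeE) simp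

lemma Kn_edge_subset: "T \<in> Kn_edges n \<Longrightarrow> T \<subseteq> {1..n}"
  by (erule Kn_edgeE) simp

lemma finite_Kn_edges: "finite (Kn_edges n)"
  by (rule finite_subset[of _ "Pow {1..n}"]) (use Kn_edge_subset in blast, simp)

lemma Kn_ends_endpoints: "T \<in> Kn_edges n \<Longrightarrow> {fst (Kn_ends T), snd (Kn_ends T)} = T"
  by (erule Kn_edgeE) (auto simp: Kn_ends_def min_def max_def)

lemma orientation_Kn_iff: "orientation (Kn_edges n) Kn_ends H \<longleftrightarrow> (\<forall>T\<in>Kn_edges n. H T \<in> T)"
  unfolding orientation_def using Kn_ends_endpoints by blast

lemma sparse_iff_not_has_cycle:
  assumes "F \<subseteq> Kn_edges n"
  shows "(\<forall>J\<subseteq>F. J \<noteq> {} \<longrightarrow> card J < card (\<Union>J)) \<longleftrightarrow> \<not> has_cycle F"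
proof
  assume sparse: "\<forall>J\<subseteq>F. J \<noteq> {} \<longrightarrow> card J < card (\<Union>J)"
  show "\<not> has_cycle F"
  proof
    assume "has_cycle F"
    then obtain J where J: "J \<subseteq> F" "J \<noteq> {}" "card (\<Union>J) \<le> card J" by (rule has_cycle_imp_dense)
    then have "card J < card (\<Union>J)" using sparse by blast
    with J(3) show False by simp
  qed
next
  assume acyclic: "\<not> has_cycle F"
  show "\<forall>J\<subseteq>F. J \<noteq> {} \<longrightarrow> card J < card (\<Union>J)"
  proof (intro allI impI)
    fix J assume J: "J \<subseteq> F" "J \<noteq> {}"
    then have JK: "J \<subseteq> Kn_edges n" using assms by blast
    then have "finite J" "\<forall>T\<in>J. card T = 2"
      using finite_subset[OF JK finite_Kn_edges] card_Kn_edge by auto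
    then show "card J < card (\<Union>J)"
      using dense_imp_has_cycle[of J] J acyclic has_cycle_mono[of J F] by linarith
  qed
qed

lemma spanning_forest_Kn_iff_forest: "spanning_forest_Kn n F \<longleftrightarrow> forest (Kn_edges n) Kn_ends F"
proof (cases "F \<subseteq> Kn_edges n")
  case True
  then have "edge_vertices Kn_ends J = \<Union>J" if "J \<subseteq> F" for J
    using Kn_ends_endpoints that unfolding edge_vertices_def by blast
  then show ?thesis
    unfolding spanning_forest_Kn_def forest_def using sparse_iff_not_has_cycle[OF True] True by simp
next
  case False
  then show ?thesis unfolding spanning_forest_Kn_def forest_def by simp
qed

theorem card_spanning_forests_Kn:
  "card {F. spanning_forest_Kn n F} = card (indegree_vectors (Kn_edges n) Kn_ends)"
  using card_indegree_vectors_eq_card_forests[OF finite_Kn_edges, of n Kn_ends]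
  by (simp add: spanning_forest_Kn_iff_forest)

section \<open>Recurrent states of the stochastic sandpile on \<open>K\<^sub>n\<^sup>0\<close>\<close>

lemma indegree_Kn_outside:
  assumes "orientation (Kn_edges n) Kn_ends H" "x \<notin> {1..n}"
  shows "indegree (Kn_edges n) H x = 0"
proof -
  have "{T\<in>Kn_edges n. H T = x} = {}"
    using assms Kn_edge_subset unfolding orientation_Kn_iff by blast
  then show ?thesis unfolding indegree_def by (simp only: card.empty)
qed

lemma indegree_Kn_eq_card_neighbours:
  assumes H: "orientation (Kn_edges n) Kn_ends H" and x: "x \<in> {1..n}"
  shows "indegree (Kn_edges n) H x = card {u\<in>{1..n}. u \<noteq> x \<and> H {u, x} = x}"
proof -
  have "{T\<in>Kn_edges n. H T = x} = (\<lambda>u. {u, x}) ` {u\<in>{1..n}. u \<noteq> x \<and> H {u, x} = x}"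
  proof (intro equalityI subsetI)
    fix T assume "T \<in> {T\<in>Kn_edges n. H T = x}"
    then have T: "T \<in> Kn_edges n" "H T = x" by simp_all
    then have "x \<in> T" using H unfolding orientation_Kn_iff by auto
    then obtain u where u: "u \<noteq> x" "T = {x, u}" by (rule doubleton_other[OF card_Kn_edge[OF T(1)]])
    then have "u \<in> {1..n}" using Kn_edge_subset[OF T(1)] by blast
    then show "T \<in> (\<lambda>u. {u, x}) ` {u\<in>{1..n}. u \<noteq> x \<and> H {u, x} = x}"
      using T u by (auto simp: insert_commute)
  qed (auto intro: doubleton_in_Kn_edges[OF _ x])
  moreover have "inj_on (\<lambda>u. {u, x}) {u\<in>{1..n}. u \<noteq> x \<and> H {u, x} = x}"
    by (rule inj_onI) (auto simp: doubleton_eq_iff)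
  ultimately show ?thesis unfolding indegree_def by (simp add: card_image)
qed

lemma indegree_Kn_le:
  assumes "orientation (Kn_edges n) Kn_ends H"
  shows "indegree (Kn_edges n) H x \<le> n - 1"
proof (cases "x \<in> {1..n}")
  case True
  have "card {u\<in>{1..n}. u \<noteq> x \<and> H {u, x} = x} \<le> card ({1..n} - {x})" by (intro card_mono) auto
  then show ?thesis using indegree_Kn_eq_card_neighbours[OF assms True] True by simp
qed (simp add: indegree_Kn_outside[OF assms])

lemma sum_indegree_Kn:
  assumes "orientation (Kn_edges n) Kn_ends H"
  shows "(\<Sum>x\<in>{1..n}. indegree (Kn_edges n) H x) = card (Kn_edges n)"
  using assms Kn_edge_subset by (intro sum_indegree finite_Kn_edges) (auto simp: orientation_Kn_iff)

lemma orientation_Kn_Min: "orientation (Kn_edges n) Kn_ends (\<lambda>T. Min T)"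
  unfolding orientation_Kn_iff by (auto elim!: Kn_edgeE simp: min_def)

lemma sconfig_stable_indegree_Kn:
  assumes "orientation (Kn_edges n) Kn_ends H"
  shows "sconfig n (indegree (Kn_edges n) H)" "stable n (indegree (Kn_edges n) H)"
  using indegree_Kn_outside[OF assms] indegree_Kn_le[OF assms] unfolding sconfig_def stable_def by auto

lemma ssm_toppleI:
  assumes "i \<in> {1..n}" "n \<le> c i" "S \<subseteq> {0..n} - {i}"
  shows "ssm_topple n c (\<lambda>j. if j = i then c i - card S else if j \<in> S \<and> j \<noteq> 0 then c j + 1 else c j)"
  using assms unfolding ssm_topple_def by blast

lemma ssm_topple_sconfig: "ssm_topple n c c' \<Longrightarrow> sconfig n c \<Longrightarrow> sconfig n c'"
  unfolding ssm_topple_def sconfig_def by auto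

definition dominates_indegree :: "nat \<Rightarrow> (nat \<Rightarrow> nat) \<Rightarrow> bool" where
  "dominates_indegree n c \<longleftrightarrow> (\<exists>H. orientation (Kn_edges n) Kn_ends H \<and> indegree (Kn_edges n) H \<le> c)"

text \<open>When vertex \<open>i\<close> fires along its edges to \<open>S\<close>, reorient its edges: those to \<open>S\<close> away from \<open>i\<close>,
  all others towards \<open>i\<close>. This keeps the configuration above the indegree vector.\<close>

definition fire_orientation :: "nat \<Rightarrow> nat set \<Rightarrow> (nat set \<Rightarrow> nat) \<Rightarrow> nat set \<Rightarrow> nat" where
  "fire_orientation i S H T = (if i \<in> T then (if T - {i} \<subseteq> S then the_elem (T - {i}) else i) else H T)"

lemma fire_orientation_at: "u \<noteq> i \<Longrightarrow> fire_orientation i S H {u, i} = (if u \<in> S then u else i)"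
  unfolding fire_orientation_def by (simp add: insert_Diff_if)

lemma orientation_fire_orientation:
  assumes "orientation (Kn_edges n) Kn_ends H"
  shows "orientation (Kn_edges n) Kn_ends (fire_orientation i S H)"
  unfolding orientation_Kn_iff
proof
  fix T assume T: "T \<in> Kn_edges n"
  show "fire_orientation i S H T \<in> T"
  proof (cases "i \<in> T")
    case True
    then obtain u where "u \<noteq> i" "T = {i, u}" by (rule doubleton_other[OF card_Kn_edge[OF T]])
    then show ?thesis using fire_orientation_at[of u i S H] by (simp add: insert_commute)
  next
    case False
    then show ?thesis using assms T unfolding orientation_Kn_iff fire_orientation_def by simp
  qed
qed

lemma indegree_fire_orientation_self:
  assumes "orientation (Kn_edges n) Kn_ends H" "i \<in> {1..n}"
  shows "indegree (Kn_edges n) (fire_orientation i S H) i = card ({1..n} - {i} - S)"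
proof -
  have "{u\<in>{1..n}. u \<noteq> i \<and> fire_orientation i S H {u, i} = i} = {1..n} - {i} - S"
    using fire_orientation_at by auto
  then show ?thesis
    using indegree_Kn_eq_card_neighbours[OF orientation_fire_orientation[OF assms(1)] assms(2)] by simp
qed

lemma indegree_fire_orientation_other:
  assumes H: "orientation (Kn_edges n) Kn_ends H" and x: "x \<in> {1..n}" "x \<noteq> i"
  shows "indegree (Kn_edges n) (fire_orientation i S H) x \<le> indegree (Kn_edges n) H x + of_bool (x \<in> S)"
proof -
  have "{u\<in>{1..n}. u \<noteq> x \<and> fire_orientation i S H {u, x} = x}
          \<subseteq> {u\<in>{1..n}. u \<noteq> x \<and> H {u, x} = x} \<union> (if x \<in> S then {i} else {})"
    using fire_orientation_at[of x i S H] x(2) by (auto simp: fire_orientation_def insert_commute)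
  then have "card {u\<in>{1..n}. u \<noteq> x \<and> fire_orientation i S H {u, x} = x}
               \<le> card ({u\<in>{1..n}. u \<noteq> x \<and> H {u, x} = x} \<union> (if x \<in> S then {i} else {}))"
    by (rule card_mono[rotated]) simp
  also have "\<dots> \<le> card {u\<in>{1..n}. u \<noteq> x \<and> H {u, x} = x} + of_bool (x \<in> S)"
    by (cases "x \<in> S") (simp_all add: card_insert_if)
  finally show ?thesis
    using indegree_Kn_eq_card_neighbours[OF H x(1)]
      indegree_Kn_eq_card_neighbours[OF orientation_fire_orientation[OF H] x(1)] by simp
qed

lemma ssm_topple_dominates_indegree:
  assumes "ssm_topple n c c'" "dominates_indegree n c"
  shows "dominates_indegree n c'"
proof -
  obtain i S where i: "i \<in> {1..n}" "n \<le> c i" and S: "S \<subseteq> {0..n} - {i}"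
    and c': "c' = (\<lambda>j. if j = i then c i - card S else if j \<in> S \<and> j \<noteq> 0 then c j + 1 else c j)"
    using assms(1) unfolding ssm_topple_def by blast
  obtain H where H: "orientation (Kn_edges n) Kn_ends H" "indegree (Kn_edges n) H \<le> c"
    using assms(2) unfolding dominates_indegree_def by blast
  let ?H' = "fire_orientation i S H"
  have "card ({1..n} - {i} - S) + card S = card ({1..n} - {i} - S \<union> S)"
    using finite_subset[OF S] by (intro card_Un_disjoint[symmetric]) auto
  also have "\<dots> \<le> card ({0..n} - {i})" using S by (intro card_mono) auto
  also have "\<dots> = n" using i by simp
  finally have "indegree (Kn_edges n) ?H' i \<le> c' i"
    using indegree_fire_orientation_self[OF H(1) i(1)] i c' by simp
  moreover have "indegree (Kn_edges n) ?H' x \<le> c' x" if "x \<noteq> i" for x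
  proof (cases "x \<in> {1..n}")
    case True
    have "indegree (Kn_edges n) ?H' x \<le> indegree (Kn_edges n) H x + of_bool (x \<in> S)"
      by (rule indegree_fire_orientation_other[OF H(1) True that])
    moreover have "indegree (Kn_edges n) H x \<le> c x" using H(2) by (simp add: le_fun_def)
    ultimately show ?thesis using c' that True by auto
  qed (simp add: indegree_Kn_outside[OF orientation_fire_orientation[OF H(1)]])
  ultimately have "indegree (Kn_edges n) ?H' \<le> c'" unfolding le_fun_def by metis
  then show ?thesis using orientation_fire_orientation[OF H(1)] unfolding dominates_indegree_def by blast
qed

lemma ssm_topples_dominates_indegree:
  "(ssm_topple n)\<^sup>*\<^sup>* c c' \<Longrightarrow> sconfig n c \<and> dominates_indegree n c \<Longrightarrow>
     sconfig n c' \<and> dominates_indegree n c'"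
  by (induction rule: rtranclp_induct) (auto intro: ssm_topple_sconfig ssm_topple_dominates_indegree)

lemma ssm_step_dominates_indegree:
  assumes "ssm_step n c c'" "dominates_indegree n c"
  shows "sconfig n c' \<and> stable n c' \<and> dominates_indegree n c'"
proof -
  obtain i where i: "i \<in> {1..n}" and sc: "sconfig n c"
    and stab: "(ssm_topple n)\<^sup>*\<^sup>* (c(i := c i + 1)) c'" "stable n c'"
    using assms(1) unfolding ssm_step_def stabilises_to_def by blast
  have "sconfig n (c(i := c i + 1))" using sc i unfolding sconfig_def by auto
  moreover have "c \<le> c(i := c i + 1)" by (simp add: le_fun_def)
  then have "dominates_indegree n (c(i := c i + 1))"
    using assms(2) order_trans unfolding dominates_indegree_def by blast
  ultimately show ?thesis using ssm_topples_dominates_indegree[OF stab(1)] stab(2) by blast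
qed

lemma ssm_steps_dominates_indegree:
  "(ssm_step n)\<^sup>*\<^sup>* c c' \<Longrightarrow> sconfig n c \<and> stable n c \<and> dominates_indegree n c \<Longrightarrow>
     sconfig n c' \<and> stable n c' \<and> dominates_indegree n c'"
  by (induction rule: rtranclp_induct) (auto dest: ssm_step_dominates_indegree)

lemma ssm_steps_add_grains:
  assumes g: "sconfig n g" "stable n g"
  shows "sconfig n c \<Longrightarrow> c \<le> g \<Longrightarrow> (ssm_step n)\<^sup>*\<^sup>* c g"
proof (induction "\<Sum>x\<in>{1..n}. g x - c x" arbitrary: c rule: less_induct)
  case less
  show ?case
  proof (cases "\<exists>i\<in>{1..n}. c i < g i")
    case False
    have "c x = g x" for x
      using False less.prems g(1) unfolding sconfig_def le_fun_def
      by (cases "x \<in> {1..n}") (auto simp: not_less intro: antisym)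
    then have "c = g" by (rule ext)
    then show ?thesis by simp
  next
    case True
    then obtain i where i: "i \<in> {1..n}" "c i < g i" by blast
    define c1 where "c1 = c(i := c i + 1)"
    have c1g: "c1 \<le> g" using less.prems(2) i(2) by (auto simp: c1_def le_fun_def)
    have "stable n c" "stable n c1" using g(2) less.prems(2) c1g unfolding stable_def le_fun_def
      by (meson order_trans)+
    then have "ssm_step n c c1"
      unfolding ssm_step_def stabilises_to_def using less.prems(1) i(1) c1_def by blast
    moreover have "(\<Sum>x\<in>{1..n}. g x - c1 x) < (\<Sum>x\<in>{1..n}. g x - c x)"
      using i by (intro sum_strict_mono_ex1) (auto simp: c1_def)
    moreover have "sconfig n c1" using less.prems(1) i(1) unfolding sconfig_def c1_def by auto
    ultimately show ?thesis using less.hyps c1g by (blast intro: converse_rtranclp_into_rtranclp)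
  qed
qed

definition max_stable :: "nat \<Rightarrow> nat \<Rightarrow> nat" where
  "max_stable n x = (if x \<in> {1..n} then n - 1 else 0)"

lemma ssm_steps_to_max_stable:
  assumes "sconfig n c" "stable n c"
  shows "(ssm_step n)\<^sup>*\<^sup>* c (max_stable n)"
  using assms by (intro ssm_steps_add_grains) (auto simp: sconfig_def stable_def max_stable_def le_fun_def)

lemma ssm_topples_full_to_sink:
  "finite W \<Longrightarrow> W \<subseteq> {1..n} \<Longrightarrow> \<forall>w\<in>W. c w = n \<Longrightarrow>
     (ssm_topple n)\<^sup>*\<^sup>* c (\<lambda>j. if j \<in> W then n - 1 else c j)"
proof (induction W rule: finite_induct)
  case (insert w W)
  let ?cW = "\<lambda>j. if j \<in> W then n - 1 else c j"
  have "(ssm_topple n)\<^sup>*\<^sup>* c ?cW" using insert by simp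
  moreover have "(\<lambda>j. if j \<in> insert w W then n - 1 else c j) =
      (\<lambda>j. if j = w then ?cW w - card {0::nat} else if j \<in> {0} \<and> j \<noteq> 0 then ?cW j + 1 else ?cW j)"
    using insert by auto
  then have "ssm_topple n ?cW (\<lambda>j. if j \<in> insert w W then n - 1 else c j)"
    using ssm_toppleI[of w n ?cW "{0}"] insert by simp
  ultimately show ?case by (rule rtranclp.rtrancl_into_rtrancl[of "ssm_topple n"])
qed simp

text \<open>The \<open>k\<close>-th configuration on the way from \<^const>\<open>max_stable\<close> to the indegree vector of \<open>H\<close>:
  vertices \<open>1..k\<close> carry their indegree under \<open>H\<close> in the complete graph on \<open>1..k\<close>, the others are full.\<close>

definition stage_config :: "nat \<Rightarrow> (nat set \<Rightarrow> nat) \<Rightarrow> nat \<Rightarrow> nat \<Rightarrow> nat" where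
  "stage_config n H k x =
     (if x \<notin> {1..n} then 0 else if k < x then n - 1 else card {u\<in>{1..k}. u \<noteq> x \<and> H {u, x} = x})"

lemma stage_config_0: "stage_config n H 0 = max_stable n"
  by (auto simp: stage_config_def max_stable_def)

lemma stage_config_n:
  assumes "orientation (Kn_edges n) Kn_ends H"
  shows "stage_config n H n = indegree (Kn_edges n) H"
proof
  fix x
  show "stage_config n H n x = indegree (Kn_edges n) H x"
    using indegree_Kn_eq_card_neighbours[OF assms] indegree_Kn_outside[OF assms]
    by (cases "x \<in> {1..n}") (auto simp: stage_config_def)
qed

lemma sconfig_stable_stage_config:
  assumes "k \<le> n"
  shows "sconfig n (stage_config n H k)" "stable n (stage_config n H k)"
proof -
  have "card {u\<in>{1..k}. u \<noteq> x \<and> H {u, x} = x} \<le> n - 1" if "x \<in> {1..n}" "x \<le> k" for x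
  proof -
    have "card {u\<in>{1..k}. u \<noteq> x \<and> H {u, x} = x} \<le> card ({1..n} - {x})"
      using that assms by (intro card_mono) auto
    then show ?thesis using that by simp
  qed
  then show "sconfig n (stage_config n H k)" "stable n (stage_config n H k)"
    unfolding sconfig_def stable_def stage_config_def by auto
qed

lemma card_edges_to_new_vertex:
  assumes "orientation (Kn_edges n) Kn_ends H" "Suc k \<le> n"
  shows "card {u\<in>{1..k}. H {u, Suc k} = u} + card {u\<in>{1..k}. H {u, Suc k} = Suc k} = k"
proof -
  have "H {u, Suc k} = u \<or> H {u, Suc k} = Suc k" if "u \<in> {1..k}" for u
    using assms that doubleton_in_Kn_edges[of u n "Suc k"] unfolding orientation_Kn_iff by auto
  then have "{u\<in>{1..k}. H {u, Suc k} = u} \<union> {u\<in>{1..k}. H {u, Suc k} = Suc k} = {1..k}" by blast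
  then have "k = card ({u\<in>{1..k}. H {u, Suc k} = u} \<union> {u\<in>{1..k}. H {u, Suc k} = Suc k})" by simp
  also have "\<dots> = card {u\<in>{1..k}. H {u, Suc k} = u} + card {u\<in>{1..k}. H {u, Suc k} = Suc k}"
    by (rule card_Un_disjoint) auto
  finally show ?thesis by simp
qed

lemma stage_config_Suc_new:
  "Suc k \<le> n \<Longrightarrow> stage_config n H (Suc k) (Suc k) = card {u\<in>{1..k}. H {u, Suc k} = Suc k}"
  unfolding stage_config_def by (auto intro!: arg_cong[of _ _ card] simp: insert_commute)

lemma stage_config_Suc_old:
  assumes "x \<in> {1..k}" "Suc k \<le> n"
  shows "stage_config n H (Suc k) x = stage_config n H k x + of_bool (H {Suc k, x} = x)"
proof -
  have "{u\<in>{1..Suc k}. u \<noteq> x \<and> H {u, x} = x} =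
          (if H {Suc k, x} = x then insert (Suc k) else id) {u\<in>{1..k}. u \<noteq> x \<and> H {u, x} = x}"
    using assms(1) by (auto simp: le_Suc_eq)
  then show ?thesis using assms unfolding stage_config_def by auto
qed

lemma stage_config_fire:
  assumes H: "orientation (Kn_edges n) Kn_ends H" and k: "Suc k \<le> n"
  shows "ssm_topple n ((stage_config n H k)(Suc k := n))
           (\<lambda>x. if x \<in> {Suc (Suc k)..n} then n else stage_config n H (Suc k) x)"
proof -
  define v where "v = Suc k"
  define Out where "Out = {u\<in>{1..k}. H {u, v} = u}"
  \<comment> \<open>firing into \<open>S\<close> leaves \<open>v\<close> with its indegree within \<open>1..v\<close>, and an earlier \<open>u\<close> gains
      a grain iff \<open>H\<close> orients \<open>{u, v}\<close> towards \<open>u\<close>\<close>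
  define S where "S = insert 0 ({Suc v..n} \<union> Out)"
  let ?c = "(stage_config n H k)(v := n)"
  have v: "v \<in> {1..n}" using k by (simp add: v_def)
  have S: "S \<subseteq> {0..n} - {v}" using k by (auto simp: S_def Out_def v_def)
  have "card ({Suc v..n} \<union> Out) = card {Suc v..n} + card Out"
    by (rule card_Un_disjoint) (auto simp: Out_def v_def)
  then have "card S = 1 + (n - v) + card Out" by (simp add: S_def Out_def)
  then have fire_v: "n - card S = stage_config n H (Suc k) v"
    using card_edges_to_new_vertex[OF H k] stage_config_Suc_new[OF k] k by (simp add: Out_def v_def)
  have "(\<lambda>x. if x = v then ?c v - card S else if x \<in> S \<and> x \<noteq> 0 then ?c x + 1 else ?c x) =
          (\<lambda>x. if x \<in> {Suc v..n} then n else stage_config n H (Suc k) x)"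
  proof
    fix x
    consider "x = v" | "x \<in> {Suc v..n}" | "x \<in> {1..k}" | "x \<notin> {1..n}" by (force simp: v_def)
    then show "(if x = v then ?c v - card S else if x \<in> S \<and> x \<noteq> 0 then ?c x + 1 else ?c x) =
                 (if x \<in> {Suc v..n} then n else stage_config n H (Suc k) x)"
    proof cases
      case 1
      then show ?thesis using fire_v by simp
    next
      case 2
      then show ?thesis using k by (auto simp: S_def v_def stage_config_def)
    next
      case 3
      then show ?thesis using stage_config_Suc_old[OF 3 k, of H]
        by (auto simp: S_def Out_def v_def insert_commute)
    next
      case 4
      then show ?thesis using k by (auto simp: S_def Out_def v_def stage_config_def)
    qed
  qed
  then show ?thesis using ssm_toppleI[OF v _ S, of ?c] by (simp add: v_def)
qed

lemma ssm_step_stage_config: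
  assumes H: "orientation (Kn_edges n) Kn_ends H" and k: "Suc k \<le> n"
  shows "ssm_step n (stage_config n H k) (stage_config n H (Suc k))"
proof -
  let ?W = "{Suc (Suc k)..n}" and ?c = "stage_config n H k" and ?c' = "stage_config n H (Suc k)"
  let ?fired = "\<lambda>x. if x \<in> ?W then n else ?c' x"
  have "?c (Suc k) + 1 = n" using k by (simp add: stage_config_def)
  then have "ssm_topple n (?c(Suc k := ?c (Suc k) + 1)) ?fired" using stage_config_fire[OF H k] by simp
  moreover have "(ssm_topple n)\<^sup>*\<^sup>* ?fired (\<lambda>j. if j \<in> ?W then n - 1 else ?fired j)"
    by (rule ssm_topples_full_to_sink) auto
  moreover have "(\<lambda>j. if j \<in> ?W then n - 1 else ?fired j) = ?c'" by (auto simp: stage_config_def)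
  ultimately have "stabilises_to n (?c(Suc k := ?c (Suc k) + 1)) ?c'"
    unfolding stabilises_to_def using sconfig_stable_stage_config[OF k]
    by (auto intro: converse_rtranclp_into_rtranclp[of "ssm_topple n"])
  then show ?thesis
    unfolding ssm_step_def using sconfig_stable_stage_config[of k n H] k by auto
qed

lemma ssm_steps_max_stable_to_indegree:
  assumes "orientation (Kn_edges n) Kn_ends H"
  shows "(ssm_step n)\<^sup>*\<^sup>* (max_stable n) (indegree (Kn_edges n) H)"
proof -
  have "(ssm_step n)\<^sup>*\<^sup>* (stage_config n H 0) (stage_config n H k)" if "k \<le> n" for k
    using that
  proof (induction k)
    case (Suc k)
    then show ?case
      using ssm_step_stage_config[OF assms] by (auto intro: rtranclp.rtrancl_into_rtrancl[of "ssm_step n"])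
  qed simp
  from this[of n] show ?thesis by (simp add: stage_config_0 stage_config_n[OF assms])
qed

theorem SR_iff_dominates_indegree: "SR n c \<longleftrightarrow> sconfig n c \<and> stable n c \<and> dominates_indegree n c"
proof
  assume SR: "SR n c"
  then have c: "sconfig n c" "stable n c" unfolding SR_def by auto
  let ?d = "indegree (Kn_edges n) (\<lambda>T. Min T)"
  have "(ssm_step n)\<^sup>*\<^sup>* c ?d"
    using ssm_steps_to_max_stable[OF c] ssm_steps_max_stable_to_indegree[OF orientation_Kn_Min]
    by (rule rtranclp_trans)
  then have "(ssm_step n)\<^sup>*\<^sup>* ?d c" using SR unfolding SR_def by blast
  moreover have "sconfig n ?d \<and> stable n ?d \<and> dominates_indegree n ?d"
    using sconfig_stable_indegree_Kn[OF orientation_Kn_Min] orientation_Kn_Min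
    unfolding dominates_indegree_def by blast
  ultimately show "sconfig n c \<and> stable n c \<and> dominates_indegree n c" by (rule ssm_steps_dominates_indegree)
next
  assume c: "sconfig n c \<and> stable n c \<and> dominates_indegree n c"
  then obtain H where H: "orientation (Kn_edges n) Kn_ends H" "indegree (Kn_edges n) H \<le> c"
    unfolding dominates_indegree_def by blast
  have "(ssm_step n)\<^sup>*\<^sup>* c' c" if "(ssm_step n)\<^sup>*\<^sup>* c c'" for c'
  proof -
    have "sconfig n c'" "stable n c'" using ssm_steps_dominates_indegree[OF that c] by auto
    then have "(ssm_step n)\<^sup>*\<^sup>* c' (max_stable n)" by (rule ssm_steps_to_max_stable)
    moreover have "(ssm_step n)\<^sup>*\<^sup>* (max_stable n) (indegree (Kn_edges n) H)"
      by (rule ssm_steps_max_stable_to_indegree[OF H(1)])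
    moreover have "(ssm_step n)\<^sup>*\<^sup>* (indegree (Kn_edges n) H) c"
      using ssm_steps_add_grains c sconfig_stable_indegree_Kn[OF H(1)] H(2) by blast
    ultimately show ?thesis by (meson rtranclp_trans)
  qed
  then show "SR n c" unfolding SR_def using c by blast
qed

lemma sconfig_eqI_sum:
  assumes "sconfig n c" "sconfig n c'" "\<forall>i\<in>{1..n}. c' i \<le> c i" "(\<Sum>i\<in>{1..n}. c i) \<le> (\<Sum>i\<in>{1..n}. c' i)"
  shows "c' = c"
proof
  fix x
  show "c' x = c x"
  proof (cases "x \<in> {1..n}")
    case True
    have "(\<Sum>i\<in>{1..n}. c' i) = (\<Sum>i\<in>{1..n}. c i)"
      using assms(3,4) sum_mono[of "{1..n}" c' c] by simp
    then show ?thesis using sum_mono_inv[OF _ _ True] assms(3) by blast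
  next
    case False
    then show ?thesis using assms(1,2) by (simp add: sconfig_def)
  qed
qed

theorem minimal_SR_iff_indegree_vector: "minimal_SR n c \<longleftrightarrow> c \<in> indegree_vectors (Kn_edges n) Kn_ends"
proof
  assume min: "minimal_SR n c"
  then obtain H where H: "orientation (Kn_edges n) Kn_ends H" "indegree (Kn_edges n) H \<le> c"
    unfolding minimal_SR_def SR_iff_dominates_indegree dominates_indegree_def by blast
  have "SR n (indegree (Kn_edges n) H)"
    using sconfig_stable_indegree_Kn[OF H(1)] H(1)
    unfolding SR_iff_dominates_indegree dominates_indegree_def by blast
  moreover have "\<forall>i\<in>{1..n}. indegree (Kn_edges n) H i \<le> c i" using H(2) by (simp add: le_fun_def)
  ultimately have "indegree (Kn_edges n) H = c" using min unfolding minimal_SR_def by blast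
  then show "c \<in> indegree_vectors (Kn_edges n) Kn_ends" unfolding indegree_vectors_def using H(1) by blast
next
  assume "c \<in> indegree_vectors (Kn_edges n) Kn_ends"
  then obtain H where H: "orientation (Kn_edges n) Kn_ends H" "c = indegree (Kn_edges n) H"
    unfolding indegree_vectors_def by blast
  have c: "sconfig n c" "stable n c" using sconfig_stable_indegree_Kn[OF H(1)] H(2) by simp_all
  then have SR: "SR n c" using H unfolding SR_iff_dominates_indegree dominates_indegree_def by blast
  have "c' = c" if SR': "SR n c'" and le: "\<forall>i\<in>{1..n}. c' i \<le> c i" for c'
  proof -
    obtain H' where H': "orientation (Kn_edges n) Kn_ends H'" "indegree (Kn_edges n) H' \<le> c'"
      and c': "sconfig n c'" using SR' unfolding SR_iff_dominates_indegree dominates_indegree_def by blast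
    have "(\<Sum>i\<in>{1..n}. c i) = (\<Sum>i\<in>{1..n}. indegree (Kn_edges n) H' i)"
      using sum_indegree_Kn[OF H(1)] sum_indegree_Kn[OF H'(1)] H(2) by simp
    also have "\<dots> \<le> (\<Sum>i\<in>{1..n}. c' i)" using H'(2) by (intro sum_mono) (simp add: le_fun_def)
    finally show ?thesis using sconfig_eqI_sum[OF c(1) c' le] by blast
  qed
  then show "minimal_SR n c" unfolding minimal_SR_def using SR by blast
qed

theorem proposition3p9:
  fixes n :: nat
  assumes "n \<ge> 1"
  shows "card {c. minimal_SR n c} = card {F. spanning_forest_Kn n F}"
proof -
  have "{c. minimal_SR n c} = indegree_vectors (Kn_edges n) Kn_ends"
    using minimal_SR_iff_indegree_vector by blast
  then show ?thesis using card_spanning_forests_Kn by simp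
qed

end
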